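(* Let $C>0$ and $\varepsilon>0$, and suppose the angular velocity $v_\theta$ of an axially symmetric velocity field satisfies $|v_\theta(x,t)|\le \dfrac{C}{r\,|\ln r|^{2+\varepsilon}}$ for all $t\ge0$ and all $x$ with $r<1/2$. Then for every $\lambda_1>0$, $v_\theta$ is in the $\lambda_1$ critical class.
   Context: Cylindrical coordinates: $x=(r\cos\theta,r\sin\theta,x_3)$, $r=\sqrt{x_1^2+x_2^2}$. An axially symmetric velocity field has the form $v=v_r(r,x_3,t)e_r+v_\theta(r,x_3,t)e_\theta+v_3(r,x_3,t)e_3$ with $e_r=(x_1/r,x_2/r,0)$, $e_\theta=(-x_2/r,x_1/r,0)$, $e_3=(0,0,1)$. A function $\psi(y,s)$ is axially symmetric in $y$ if it depends on $y$ only through $r$ and $y_3$. For $a>0$, $l\ge a$ let $D_{a,l}=\{(r,\theta,x_3):0\le r<a,\ -l<x_3<l,\ 0\le\theta<2\pi\}$. Definition ($\lambda_1$ critical class): $v_\theta$ is in the $\lambda_1$ critical class if there exist $a\in(0,1)$ and $\lambda_2>0$ such that $$\int_0^t\!\!\int_{\mathbb{R}^3}\Big(\frac{|v_\theta|}{r}+v_\theta^2\Big)\psi^2\,dy\,ds\le \lambda_1\int_0^t\!\!\int_{\mathbb{R}^3}|\nabla\psi|^2\,dy\,ds+\frac{\lambda_2}{a^2}\int_0^t\!\!\int_{\mathbb{R}^3}\psi^2\,dy\,ds$$ for all $t\ge0$ and all smooth $\psi=\psi(y,s)$, $s\in[0,t]$, axially symmetric in $y$ with $\psi(\cdot,s)$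 supported in $D_{a,l}$ for some $l\ge a$. *)

theory Defs
  imports "HOL-Analysis.Analysis"
begin

definition rad :: "real^3 \<Rightarrow> real" where
  "rad y = sqrt ((y$1)^2 + (y$2)^2)"

definition cyl :: "real \<Rightarrow> real \<Rightarrow> (real^3) set" where
  "cyl a l = {y. rad y < a \<and> -l < y$3 \<and> y$3 < l}"

fun Ck :: "nat \<Rightarrow> ('a::euclidean_space \<Rightarrow> real) \<Rightarrow> bool" where
  "Ck 0 f = continuous_on UNIV f"
| "Ck (Suc k) f = (f differentiable_on UNIV \<and> continuous_on UNIV f \<and>
      (\<forall>i\<in>Basis. Ck k (\<lambda>x. frechet_derivative f (at x) i)))"

definition smooth_fun :: "('a::euclidean_space \<Rightarrow> real) \<Rightarrow> bool" where
  "smooth_fun f = (\<forall>k. Ck k f)"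

definition grad_y :: "(real^3 \<Rightarrow> real \<Rightarrow> real) \<Rightarrow> real^3 \<Rightarrow> real \<Rightarrow> real^3" where
  "grad_y \<psi> y s = (\<chi> i. frechet_derivative (\<lambda>z. \<psi> z s) (at y) (axis i 1))"

definition axisym :: "(real^3 \<Rightarrow> real \<Rightarrow> real) \<Rightarrow> bool" where
  "axisym \<psi> = (\<forall>y z s. rad y = rad z \<and> y$3 = z$3 \<longrightarrow> \<psi> y s = \<psi> z s)"

definition admissible :: "real \<Rightarrow> real \<Rightarrow> (real^3 \<Rightarrow> real \<Rightarrow> real) \<Rightarrow> bool" where
  "admissible a t \<psi> = (smooth_fun (\<lambda>p::(real^3) \<times> real. \<psi> (fst p) (snd p)) \<and> axisym \<psi> \<and>
     (\<exists>l\<ge>a. \<forall>s\<in>{0..t}. closure {y. \<psi> y s \<noteq> 0} \<subseteq> cyl a l))"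

text \<open>The lambda_1 critical class; vth r x3 t is the angular velocity v_theta.
  Integrals of nonnegative functions are nonnegative Lebesgue integrals (values in ennreal).\<close>
definition critical_class :: "real \<Rightarrow> (real \<Rightarrow> real \<Rightarrow> real \<Rightarrow> real) \<Rightarrow> bool" where
  "critical_class lam1 vth = (\<exists>a lam2. 0 < a \<and> a < 1 \<and> 0 < lam2 \<and>
     (\<forall>t\<ge>0. \<forall>\<psi>. admissible a t \<psi> \<longrightarrow>
        (\<integral>\<^sup>+ s\<in>{0..t}. (\<integral>\<^sup>+ y. ennreal ((\<bar>vth (rad y) (y$3) s\<bar> / rad y + (vth (rad y) (y$3) s)^2) * (\<psi> y s)^2) \<partial>lborel) \<partial>lborel)
        \<le> ennreal lam1 * (\<integral>\<^sup>+ s\<in>{0..t}. (\<integral>\<^sup>+ y. ennreal ((norm (grad_y \<psi> y s))^2) \<partial>lborel) \<partial>lborel)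
          + ennreal (lam2 / a^2) * (\<integral>\<^sup>+ s\<in>{0..t}. (\<integral>\<^sup>+ y. ennreal ((\<psi> y s)^2) \<partial>lborel) \<partial>lborel)))"

end

theory Submission
  imports Defs
begin

text \<open>
  Write L = -ln r. On the thin cylinder r < a = exp (-L0) the decay hypothesis gives
  |v_theta|/r + v_theta^2 <= (C + C^2) L0^(-m) L^(-(2+m)) / r^2 with m = eps/2. For an axially
  symmetric psi vanishing at r = a, integrating (psi^2 L^(-(1+m)))' over [0, a] and using AM-GM
  yields the Hardy-type inequality
    int_0^a psi^2 L^(-(2+m)) dr/r <= 4 int_0^a (d_r psi)^2 L^(-m) r dr <= 4 L0^(-m) int_0^a (d_r psi)^2 r dr.
  In cylindrical coordinates this bounds the left-hand side of the critical class inequality by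
  4 (C + C^2) L0^(-eps) times the Dirichlet integral of psi, and L0 is chosen so large that this
  constant is at most lambda_1.
\<close>

section \<open>A Hardy inequality with logarithmic weight\<close>

lemma has_real_derivative_neg_ln_powr:
  fixes q x :: real
  assumes "0 < x" "x < 1"
  shows "((\<lambda>x. (-ln x) powr q) has_real_derivative (-q * (-ln x) powr (q - 1) / x)) (at x)"
proof -
  have "((\<lambda>x. - ln x) has_real_derivative (-1/x)) (at x)"
    using assms by (auto intro!: derivative_eq_intros)
  from DERIV_powr[OF this _ DERIV_const[of q]] show ?thesis
    using assms by (simp add: field_simps powr_diff)
qed

text \<open>At \<open>x = 0\<close> the function takes the value \<open>0 powr q = 0\<close>, which is also its limit.\<close>
lemma continuous_on_neg_ln_powr:
  fixes q a :: real
  assumes "q < 0" "a < 1"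
  shows "continuous_on {0..a} (\<lambda>x. (-ln x) powr q)"
proof -
  have "continuous (at x within {0..a}) (\<lambda>x. (-ln x) powr q)" if x: "x \<in> {0..a}" for x
  proof (cases "x = 0")
    case True
    have "filterlim (\<lambda>x. - ln x) at_top (at_right (0::real))"
      using ln_at_0 by (simp add: filterlim_uminus_at_top)
    then have "((\<lambda>x. (-ln x) powr q) \<longlongrightarrow> 0) (at 0 within {0<..a})"
      by (rule tendsto_within_subset[OF tendsto_neg_powr[OF assms(1)]]) auto
    moreover have "at 0 within {0..a} = at 0 within {0<..a}"
      by (rule at_within_nhd[where S=UNIV]) auto
    ultimately show ?thesis
      using True by (simp add: continuous_within)
  next
    case False
    with x assms have "0 < x" "x < 1" by auto
    from has_real_derivative_neg_ln_powr[OF this] show ?thesis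
      by (rule continuous_at_imp_continuous_within[OF DERIV_isCont])
  qed
  then show ?thesis
    by (simp add: continuous_on_eq_continuous_within)
qed

text \<open>AM-GM with the weight c = (1 + m) L^(-(2+m)) / x, chosen so that the first term on the
  right is half of the term produced by the integration by parts.\<close>
lemma log_hardy_pointwise:
  fixes x m u u' :: real
  assumes x: "0 < x" "x < 1" and m: "0 < m"
  shows "- (2 * u * u' * (-ln x) powr (-(1+m)))
    \<le> (1+m)/2 * (u^2 * (-ln x) powr (-(2+m)) / x) + 2/(1+m) * (u'^2 * x * (-ln x) powr (-m))"
proof -
  define L where "L = - ln x"
  have L: "0 < L" using x by (simp add: L_def)
  define A where "A = L powr (-(2+m))"
  have A: "0 < A" using L by (simp add: A_def)
  define c where "c = (1+m) * A / x"
  have c: "0 < c" using A m x by (simp add: c_def)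
  define Y where "Y = u' * L powr (-(1+m))"
  have Am: "0 < A + A * m"
    using A m by (simp add: add_pos_nonneg)
  have "(L powr (-(1+m)))^2 = L powr (-m) * A"
    unfolding A_def power2_eq_square powr_add[symmetric]
    by (rule arg_cong[where f="\<lambda>e. L powr e"]) simp
  then have Y2: "Y^2 = u'^2 * L powr (-m) * A"
    by (simp add: Y_def power_mult_distrib)
  have "u^2 * c/2 + 2 * Y^2/c + 2 * u * Y = (u * c + 2 * Y)^2 / (2*c)"
    using c by (simp add: field_simps power2_eq_square)
  moreover have "(u * c + 2 * Y)^2 / (2*c) \<ge> 0"
    using c by simp
  ultimately have "- (2 * u * Y) \<le> u^2 * c/2 + 2 * Y^2/c"
    by linarith
  also have "u^2 * c/2 = (1+m)/2 * (u^2 * A / x)"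
    using x by (simp add: c_def field_simps)
  also have "2 * Y^2/c = 2/(1+m) * (u'^2 * x * L powr (-m))"
    unfolding Y2 c_def using A Am m x by (simp add: field_simps)
  finally show ?thesis
    by (simp add: Y_def L_def A_def mult.assoc)
qed

text \<open>The boundary terms vanish: at \<open>a\<close> because \<open>g a = 0\<close>, at \<open>0\<close> because \<open>(-ln 0) powr q = 0\<close>.\<close>
lemma log_hardy_by_parts:
  fixes g g' :: "real \<Rightarrow> real" and a m :: real
  assumes a: "0 < a" "a < 1" and m: "0 < m"
    and der: "\<And>x. 0 \<le> x \<Longrightarrow> x \<le> a \<Longrightarrow> (g has_real_derivative g' x) (at x)"
    and ga: "g a = 0"
  shows "((\<lambda>x. 2 * g x * g' x * (-ln x) powr (-(1+m))
            + (1+m) * ((g x)^2 * (-ln x) powr (-(2+m)) / x)) has_integral 0) {0..a}"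
proof -
  define F where "F = (\<lambda>x. (g x)^2 * (-ln x) powr (-(1+m)))"
  have "continuous_on {0..a} g"
    by (rule DERIV_continuous_on[where D=g']) (auto intro: has_field_derivative_at_within der)
  then have "continuous_on {0..a} F"
    unfolding F_def using m a
    by (intro continuous_on_mult continuous_on_power continuous_on_neg_ln_powr) auto
  moreover have "(F has_vector_derivative
      2 * g x * g' x * (-ln x) powr (-(1+m)) + (1+m) * ((g x)^2 * (-ln x) powr (-(2+m)) / x)) (at x)"
    if x: "x \<in> {0<..<a}" for x
  proof -
    have e: "-(1+m) - 1 = -(2+m)" by simp
    have "(F has_real_derivative 2 * g x * g' x * (-ln x) powr (-(1+m))
        + (g x)^2 * (-(-(1+m)) * (-ln x) powr (-(1+m) - 1) / x)) (at x)"
      unfolding F_def using x a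
      by (auto intro!: derivative_eq_intros der has_real_derivative_neg_ln_powr simp: field_simps)
    then show ?thesis
      unfolding e has_real_derivative_iff_has_vector_derivative[symmetric]
      by (simp add: algebra_simps)
  qed
  ultimately have "((\<lambda>x. 2 * g x * g' x * (-ln x) powr (-(1+m))
      + (1+m) * ((g x)^2 * (-ln x) powr (-(2+m)) / x)) has_integral F a - F 0) {0..a}"
    using a by (intro fundamental_theorem_of_calculus_interior) auto
  then show ?thesis
    by (simp add: F_def ga)
qed

lemma le_of_weighted_absorption:
  fixes I J m :: real
  assumes m: "0 < m" and J: "0 \<le> J" and le: "(1+m) * I \<le> (1+m)/2 * I + 2/(1+m) * J"
  shows "I \<le> 4 * J"
proof (cases "I \<le> 0")
  case True
  with J show ?thesis by simp
next
  case False
  have "(1+m) * I = 2 * ((1+m)/2 * I)"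
    by simp
  with le have "(1+m)/2 * I \<le> 2/(1+m) * J"
    by linarith
  then have "2*(1+m) * ((1+m)/2 * I) \<le> 2*(1+m) * (2/(1+m) * J)"
    using m by (intro mult_left_mono) auto
  moreover have "2*(1+m) * ((1+m)/2 * I) = (1+m)^2 * I"
    by (simp add: power2_eq_square)
  moreover have "2*(1+m) * (2/(1+m) * J) = 4 * J"
    using m by (simp add: field_simps)
  ultimately have "(1+m)^2 * I \<le> 4 * J"
    by linarith
  moreover have "1 * I \<le> (1+m)^2 * I"
    using False m by (intro mult_right_mono one_le_power) auto
  ultimately show ?thesis
    by simp
qed

lemma log_hardy_has_integral:
  fixes g g' :: "real \<Rightarrow> real" and a m :: real
  assumes a: "0 < a" "a < 1" and m: "0 < m"
    and der: "\<And>x. 0 \<le> x \<Longrightarrow> x \<le> a \<Longrightarrow> (g has_real_derivative g' x) (at x)"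
    and cont: "continuous_on {0..a} g'" and ga: "g a = 0"
  obtains I J where "((\<lambda>x. (g x)^2 * (-ln x) powr (-(2+m)) / x) has_integral I) {0..a}"
    and "((\<lambda>x. (g' x)^2 * x * (-ln x) powr (-m)) has_integral J) {0..a}" and "I \<le> 4 * J"
proof -
  define u where "u = (\<lambda>x. 2 * g x * g' x * (-ln x) powr (-(1+m)))"
  define K where "K = (\<lambda>x. (g x)^2 * (-ln x) powr (-(2+m)) / x)"
  define j where "j = (\<lambda>x. (g' x)^2 * x * (-ln x) powr (-m))"
  have "continuous_on {0..a} g"
    by (rule DERIV_continuous_on[where D=g']) (auto intro: has_field_derivative_at_within der)
  then have "continuous_on {0..a} u"
    unfolding u_def using cont m a
    by (intro continuous_on_mult continuous_on_const continuous_on_neg_ln_powr) auto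
  then obtain U where U: "(u has_integral U) {0..a}"
    using integrable_continuous_interval by blast
  have "((\<lambda>x. u x + (1+m) * K x) has_integral 0) {0..a}"
    using log_hardy_by_parts[OF a m der ga] unfolding u_def K_def .
  from has_integral_mult_right[OF has_integral_diff[OF this U], of "1/(1+m)"]
  have K: "(K has_integral - U / (1+m)) {0..a}"
    using m by simp
  have "continuous_on {0..a} j"
    unfolding j_def using cont m a
    by (intro continuous_on_mult continuous_on_power continuous_on_id continuous_on_neg_ln_powr) auto
  then obtain J where J: "(j has_integral J) {0..a}"
    using integrable_continuous_interval by blast
  have "- u x \<le> (1+m)/2 * K x + 2/(1+m) * j x" if x: "x \<in> {0..a}" for x
  proof (cases "x = 0")
    case True
    then show ?thesis by (simp add: u_def K_def j_def)
  next
    case False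
    with x a have "0 < x" "x < 1" by auto
    then show ?thesis
      unfolding u_def K_def j_def by (rule log_hardy_pointwise[OF _ _ m])
  qed
  then have "- U \<le> (1+m)/2 * (- U / (1+m)) + 2/(1+m) * J"
    by (intro has_integral_le[OF has_integral_neg[OF U]
          has_integral_add[OF has_integral_mult_right[OF K] has_integral_mult_right[OF J]]]) simp
  then have "- U / (1+m) \<le> 4 * J"
    using m has_integral_nonneg[OF J] by (intro le_of_weighted_absorption) (auto simp: j_def)
  with K J show ?thesis
    unfolding K_def j_def by (rule that)
qed

lemma log_hardy_inequality:
  fixes g g' :: "real \<Rightarrow> real" and a m :: real
  assumes a: "0 < a" "a < 1" and m: "0 < m"
    and der: "\<And>x. 0 \<le> x \<Longrightarrow> x \<le> a \<Longrightarrow> (g has_real_derivative g' x) (at x)"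
    and cont: "continuous_on {0..a} g'" and ga: "g a = 0"
  shows "(\<integral>\<^sup>+x. ennreal ((g x)^2 * (-ln x) powr (-(2+m)) / x) * indicator {0..a} x \<partial>lborel)
    \<le> 4 * (\<integral>\<^sup>+x. ennreal ((g' x)^2 * x * (-ln x) powr (-m)) * indicator {0..a} x \<partial>lborel)"
proof -
  obtain I J where I: "((\<lambda>x. (g x)^2 * (-ln x) powr (-(2+m)) / x) has_integral I) {0..a}"
    and J: "((\<lambda>x. (g' x)^2 * x * (-ln x) powr (-m)) has_integral J) {0..a}" and "I \<le> 4 * J"
    using log_hardy_has_integral[OF a m der cont ga] .
  have "0 \<le> J"
    using has_integral_nonneg[OF J] by simp
  have "(\<integral>\<^sup>+x. ennreal ((g x)^2 * (-ln x) powr (-(2+m)) / x) * indicator {0..a} x \<partial>lborel) = ennreal I"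
    using I by (rule nn_integral_has_integral_lebesgue'[rotated]) simp
  also have "\<dots> \<le> ennreal (4 * J)"
    using \<open>I \<le> 4 * J\<close> by (rule ennreal_leI)
  also have "\<dots> = 4 * (\<integral>\<^sup>+x. ennreal ((g' x)^2 * x * (-ln x) powr (-m)) * indicator {0..a} x \<partial>lborel)"
    using J \<open>0 \<le> J\<close> by (subst nn_integral_has_integral_lebesgue'[OF _ J]) (auto simp: ennreal_mult)
  finally show ?thesis .
qed

text \<open>Unlike the library's \<open>nn_integral_cmult\<close>, no measurability is needed for a constant
  factor that is positive and finite.\<close>
lemma nn_integral_cmult_pos:
  fixes r :: real
  assumes "0 < r"
  shows "(\<integral>\<^sup>+x. ennreal r * f x \<partial>M) = ennreal r * integral\<^sup>N M f"
proof -
  have le: "c * integral\<^sup>N M h \<le> (\<integral>\<^sup>+x. c * h x \<partial>M)" for c h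
    unfolding nn_integral_def SUP_mult_left_ennreal
  proof (rule SUP_least)
    fix s assume s: "s \<in> {s. simple_function M s \<and> s \<le> h}"
    then have "c * integral\<^sup>S M s = integral\<^sup>S M (\<lambda>x. c * s x)"
      by simp
    also have "\<dots> \<le> (SUP s \<in> {s. simple_function M s \<and> s \<le> (\<lambda>x. c * h x)}. integral\<^sup>S M s)"
      using s by (intro SUP_upper) (auto simp: le_fun_def intro: mult_left_mono)
    finally show "c * integral\<^sup>S M s
        \<le> (SUP s \<in> {s. simple_function M s \<and> s \<le> (\<lambda>x. c * h x)}. integral\<^sup>S M s)" .
  qed
  have inv: "ennreal (1/r) * ennreal r = 1"
    using assms by (simp add: ennreal_mult[symmetric])
  have "ennreal (1/r) * (\<integral>\<^sup>+x. ennreal r * f x \<partial>M) \<le> integral\<^sup>N M f"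
    using le[of "ennreal (1/r)" "\<lambda>x. ennreal r * f x"] by (simp add: mult.assoc[symmetric] inv)
  then have "ennreal r * (ennreal (1/r) * (\<integral>\<^sup>+x. ennreal r * f x \<partial>M)) \<le> ennreal r * integral\<^sup>N M f"
    by (rule mult_left_mono) simp
  then have "(\<integral>\<^sup>+x. ennreal r * f x \<partial>M) \<le> ennreal r * integral\<^sup>N M f"
    by (simp add: mult.assoc[symmetric] inv mult.commute[of "ennreal r"])
  then show ?thesis
    using le[of "ennreal r" f] by (rule antisym)
qed

text \<open>The same inequality against the planar area element 2 pi rho d rho, with the weight
  (-ln rho)^(-m) on the right bounded by its value at a.\<close>
lemma log_hardy_polar:
  fixes g g' :: "real \<Rightarrow> real" and a m :: real
  assumes a: "0 < a" "a < 1" and m: "0 < m"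
    and der: "\<And>x. 0 \<le> x \<Longrightarrow> x \<le> a \<Longrightarrow> (g has_real_derivative g' x) (at x)"
    and cont: "continuous_on {0..a} g'" and ga: "g a = 0"
  shows "(\<integral>\<^sup>+\<rho>. ennreal (2*pi*\<rho>) * (ennreal ((g \<rho>)^2 * (-ln \<rho>) powr (-(2+m)) / \<rho>^2)
            * indicator {0<..<a} \<rho>) \<partial>lborel)
    \<le> ennreal (4 * (-ln a) powr (-m)) * (\<integral>\<^sup>+\<rho>. ennreal (2*pi*\<rho>) * ennreal ((g' \<rho>)^2) \<partial>lborel)"
proof -
  define c where "c = (-ln a) powr (-m) / (2*pi)"
  have c: "0 < c" using a by (simp add: c_def)
  define K where "K = (\<lambda>\<rho>. (g \<rho>)^2 * (-ln \<rho>) powr (-(2+m)) / \<rho>)"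
  have "ennreal (2*pi*\<rho>) * (ennreal ((g \<rho>)^2 * (-ln \<rho>) powr (-(2+m)) / \<rho>^2)
      * indicator {0<..<a} \<rho>) = ennreal (2*pi) * (ennreal (K \<rho>) * indicator {0..a} \<rho>)" for \<rho>
  proof (cases "\<rho> \<in> {0<..<a}")
    case True
    then have "2*pi*\<rho> * ((g \<rho>)^2 * (-ln \<rho>) powr (-(2+m)) / \<rho>^2) = 2*pi * K \<rho>"
      by (simp add: K_def power2_eq_square)
    then show ?thesis
      using True by (simp add: K_def ennreal_mult'[symmetric])
  next
    case False
    then have "\<rho> \<in> {0..a} \<Longrightarrow> K \<rho> = 0"
      using ga by (auto simp: K_def)
    then show ?thesis
      using False by (simp add: indicator_def)
  qed
  then have "(\<integral>\<^sup>+\<rho>. ennreal (2*pi*\<rho>) * (ennreal ((g \<rho>)^2 * (-ln \<rho>) powr (-(2+m)) / \<rho>^2)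
          * indicator {0<..<a} \<rho>) \<partial>lborel)
      = ennreal (2*pi) * (\<integral>\<^sup>+\<rho>. ennreal (K \<rho>) * indicator {0..a} \<rho> \<partial>lborel)"
    by (simp add: nn_integral_cmult_pos)
  also have "\<dots> \<le> ennreal (2*pi) * (4 * (\<integral>\<^sup>+\<rho>. ennreal ((g' \<rho>)^2 * \<rho> * (-ln \<rho>) powr (-m))
      * indicator {0..a} \<rho> \<partial>lborel))"
    unfolding K_def by (rule mult_left_mono[OF log_hardy_inequality[OF a m der cont ga] zero_le])
  also have "(\<integral>\<^sup>+\<rho>. ennreal ((g' \<rho>)^2 * \<rho> * (-ln \<rho>) powr (-m)) * indicator {0..a} \<rho> \<partial>lborel)
      \<le> (\<integral>\<^sup>+\<rho>. ennreal c * (ennreal (2*pi*\<rho>) * ennreal ((g' \<rho>)^2)) \<partial>lborel)"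
  proof (intro nn_integral_mono)
    fix \<rho> :: real
    show "ennreal ((g' \<rho>)^2 * \<rho> * (-ln \<rho>) powr (-m)) * indicator {0..a} \<rho>
        \<le> ennreal c * (ennreal (2*pi*\<rho>) * ennreal ((g' \<rho>)^2))"
    proof (cases "\<rho> \<in> {0<..a}")
      case True
      then have "(-ln \<rho>) powr (-m) \<le> (-ln a) powr (-m)"
        using a m by (intro powr_mono2') auto
      then have "(g' \<rho>)^2 * \<rho> * (-ln \<rho>) powr (-m) \<le> (g' \<rho>)^2 * \<rho> * (-ln a) powr (-m)"
        using True by (intro mult_left_mono) auto
      also have "\<dots> = c * (2*pi*\<rho> * (g' \<rho>)^2)"
        by (simp add: c_def)
      finally show ?thesis
        using True c by (simp add: ennreal_mult'[symmetric] ennreal_leI)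
    next
      case False
      then have "ennreal ((g' \<rho>)^2 * \<rho> * (-ln \<rho>) powr (-m)) * indicator {0..a} \<rho> = 0"
        by (cases "\<rho> = 0") (auto simp: indicator_def)
      then show ?thesis
        by (metis zero_le)
    qed
  qed
  also have "(\<integral>\<^sup>+\<rho>. ennreal c * (ennreal (2*pi*\<rho>) * ennreal ((g' \<rho>)^2)) \<partial>lborel)
      = ennreal c * (\<integral>\<^sup>+\<rho>. ennreal (2*pi*\<rho>) * ennreal ((g' \<rho>)^2) \<partial>lborel)"
    by (rule nn_integral_cmult_pos[OF c])
  also have "ennreal (2*pi) * (4 * (ennreal c * (\<integral>\<^sup>+\<rho>. ennreal (2*pi*\<rho>) * ennreal ((g' \<rho>)^2) \<partial>lborel)))
      = ennreal (4 * (2*pi * c)) * (\<integral>\<^sup>+\<rho>. ennreal (2*pi*\<rho>) * ennreal ((g' \<rho>)^2) \<partial>lborel)"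
    using c by (simp add: ennreal_mult' mult_ac)
  also have "4 * (2*pi * c) = 4 * (-ln a) powr (-m)"
    by (simp add: c_def)
  finally show ?thesis
    by (simp add: mult_left_mono)
qed

section \<open>Cylindrical coordinates\<close>

lemma nn_integral_two_pi_lessThan:
  fixes x :: real
  assumes "0 \<le> x"
  shows "(\<integral>\<^sup>+\<rho>. ennreal (2*pi*\<rho>) * indicator {..<x} \<rho> \<partial>lborel) = ennreal (pi * x^2)"
proof -
  have "((\<lambda>\<rho>. 2*pi*\<rho>) has_integral (pi * x^2 - pi * 0^2)) {0..x}"
  proof (rule fundamental_theorem_of_calculus[OF assms])
    fix y assume "y \<in> {0..x}"
    have "((\<lambda>\<rho>. pi * \<rho>^2) has_real_derivative (2*pi*y)) (at y within {0..x})"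
      by (auto intro!: derivative_eq_intros)
    then show "((\<lambda>\<rho>. pi * \<rho>^2) has_vector_derivative (2*pi*y)) (at y within {0..x})"
      by (simp add: has_real_derivative_iff_has_vector_derivative)
  qed
  then have I: "((\<lambda>\<rho>. 2*pi*\<rho>) has_integral (pi * x^2)) {0..x}"
    by simp
  have "(\<integral>\<^sup>+\<rho>. ennreal (2*pi*\<rho>) * indicator {..<x} \<rho> \<partial>lborel)
      = (\<integral>\<^sup>+\<rho>. ennreal (2*pi*\<rho>) * indicator {0..x} \<rho> \<partial>lborel)"
  proof (rule nn_integral_cong_AE)
    show "AE \<rho> in lborel. ennreal (2*pi*\<rho>) * indicator {..<x} \<rho> = ennreal (2*pi*\<rho>) * indicator {0..x} \<rho>"
      using AE_lborel_singleton[of x]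
    proof eventually_elim
      case (elim \<rho>)
      have "\<rho> < 0 \<Longrightarrow> ennreal (2*pi*\<rho>) = 0"
        by (intro ennreal_neg) (simp add: mult_nonneg_nonpos)
      then show ?case
        using elim by (cases "\<rho> < 0") (auto simp: indicator_def)
    qed
  qed
  also have "\<dots> = ennreal (pi * x^2)"
    by (rule nn_integral_has_integral_lebesgue'[OF _ I]) auto
  finally show ?thesis .
qed

lemma emeasure_distr_norm_lessThan:
  "emeasure (distr (lborel :: (real \<times> real) measure) borel norm) {..<x} = ennreal (pi * (max x 0)^2)"
proof -
  have "norm -` {..<x} \<inter> space lborel = ball (0::real \<times> real) (max x 0)"
    by (auto simp: ball_def max_def split: if_splits)
      (metis norm_ge_zero order_le_less_trans order_less_le_trans less_irrefl)
  then have "emeasure (distr (lborel :: (real \<times> real) measure) borel norm) {..<x}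
      = emeasure lborel (ball (0::real \<times> real) (max x 0))"
    by (subst emeasure_distr) auto
  also have "\<dots> = ennreal (pi * (max x 0)^2)"
    by (subst emeasure_ball) (auto simp: unit_ball_vol_2 power2_eq_square)
  finally show ?thesis .
qed

text \<open>Polar coordinates in the plane. Both measures give the half-lines \<open>{..<x}\<close>, which
  generate the Borel sets, the area of the disc of radius \<open>x\<close>.\<close>
lemma distr_norm_lborel_plane:
  "distr (lborel :: (real \<times> real) measure) borel norm = density lborel (\<lambda>\<rho>. ennreal (2*pi*\<rho>))"
proof (rule measure_eqI_generator_eq_countable[where E="range lessThan" and A="lessThan ` \<rat>" and \<Omega>=UNIV])
  show "Int_stable (range lessThan :: real set set)"
  proof (unfold Int_stable_def, safe)
    fix a b :: real
    have "{..<a} \<inter> {..<b} = {..<min a b}" by auto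
    then show "{..<a} \<inter> {..<b} \<in> range lessThan" by (metis rangeI)
  qed
  show "range lessThan \<subseteq> Pow (UNIV :: real set)" by auto
  have "sets (borel :: real measure) = sigma_sets UNIV (range lessThan)"
    by (subst borel_Iio) simp
  then show "sets (distr (lborel :: (real \<times> real) measure) borel norm) = sigma_sets UNIV (range lessThan)"
    "sets (density lborel (\<lambda>\<rho>. ennreal (2*pi*\<rho>))) = sigma_sets UNIV (range lessThan)"
    by auto
  show "lessThan ` \<rat> \<subseteq> range lessThan" by auto
  show "\<Union> (lessThan ` \<rat>) = (UNIV :: real set)"
    using Rats_no_top_le by auto (meson Rats_dense_in_real gt_ex less_trans)
  show "countable (lessThan ` (\<rat> :: real set))"
    using countable_rat by blast
  show "emeasure (distr (lborel :: (real \<times> real) measure) borel norm) X \<noteq> \<infinity>" if "X \<in> lessThan ` \<rat>" for X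
    using that emeasure_distr_norm_lessThan by auto
  fix X assume "X \<in> range (lessThan :: real \<Rightarrow> real set)"
  then obtain x where X: "X = {..<x}" by auto
  show "emeasure (distr (lborel :: (real \<times> real) measure) borel norm) X
      = emeasure (density lborel (\<lambda>\<rho>. ennreal (2*pi*\<rho>))) X"
  proof (cases "0 \<le> x")
    case True
    then show ?thesis
      unfolding X emeasure_distr_norm_lessThan
      by (subst emeasure_density) (auto simp: nn_integral_two_pi_lessThan)
  next
    case False
    then have "\<And>\<rho>. ennreal (2*pi*\<rho>) * indicator {..<x} \<rho> = 0"
      by (auto simp: indicator_def mult_nonneg_nonpos intro!: ennreal_neg)
    then have "(\<integral>\<^sup>+\<rho>. ennreal (2*pi*\<rho>) * indicator {..<x} \<rho> \<partial>lborel) = 0"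
      by (simp only:) simp
    then show ?thesis
      unfolding X emeasure_distr_norm_lessThan using False
      by (subst emeasure_density) (auto simp: max_def)
  qed
qed

lemma prod_Basis_vec:
  "(\<Prod>b\<in>(Basis :: (real^'n) set). f b) = (\<Prod>i\<in>UNIV. f (axis i 1))"
proof -
  have "(Basis :: (real^'n) set) = range (\<lambda>i. axis i 1)"
    by (auto simp: Basis_vec_def)
  moreover have "inj (\<lambda>i. axis i (1::real) :: real^'n)"
    by (auto simp: inj_on_def axis_eq_axis)
  ultimately show ?thesis
    using prod.reindex[of "\<lambda>i. axis i (1::real) :: real^'n" UNIV f] by (simp add: comp_def)
qed

lemma prod_UNIV_3: "(\<Prod>i\<in>UNIV. f i) = f (1::3) * f 2 * f 3"
  unfolding UNIV_3 by (simp add: ac_simps)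

definition cyl_coords :: "real^3 \<Rightarrow> (real \<times> real) \<times> real" where
  "cyl_coords y = ((y$1, y$2), y$3)"

lemma cyl_coords_measurable[measurable]: "cyl_coords \<in> borel_measurable borel"
  unfolding cyl_coords_def by (intro borel_measurable_continuous_onI continuous_intros)

lemma distr_cyl_coords_lborel: "distr lborel borel cyl_coords = lborel"
proof (rule lborel_eqI[symmetric])
  fix l u :: "(real \<times> real) \<times> real"
  assume le: "\<And>b. b \<in> Basis \<Longrightarrow> l \<bullet> b \<le> u \<bullet> b"
  obtain l1 l2 l3 u1 u2 u3 where lu: "l = ((l1, l2), l3)" "u = ((u1, u2), u3)"
    by (metis prod.collapse)
  have Basis: "(Basis :: ((real \<times> real) \<times> real) set) = {((1,0),0), ((0,1),0), ((0,0),1)}"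
    by (auto simp: Basis_prod_def zero_prod_def)
  define l' u' :: "real^3" where "l' = vector [l1, l2, l3]" and "u' = vector [u1, u2, u3]"
  have "box l u = (box (l1, l2) (u1, u2) \<times> box l3 u3)" "box (l1, l2) (u1, u2) = box l1 u1 \<times> box l2 u2"
    unfolding lu by (auto simp: Basis_prod_def ball_Un box_def)
  then have "cyl_coords -` box l u = box l' u'"
    by (auto simp: l'_def u'_def cyl_coords_def mem_box_cart forall_3 vector_3)
  moreover have "emeasure lborel (box l' u') = (\<Prod>b\<in>Basis. (u - l) \<bullet> b)"
  proof -
    have "l1 \<le> u1" "l2 \<le> u2" "l3 \<le> u3"
      using le[of "((1,0),0)"] le[of "((0,1),0)"] le[of "((0,0),1)"] by (simp_all add: Basis lu)
    then have "\<forall>i. l' $ i \<le> u' $ i"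
      by (simp add: forall_3 l'_def u'_def)
    then have "\<And>b. b \<in> Basis \<Longrightarrow> l' \<bullet> b \<le> u' \<bullet> b"
      by (auto simp: Basis_vec_def inner_axis)
    then have "emeasure lborel (box l' u') = (\<Prod>i\<in>UNIV. (u' - l') $ i)"
      by (simp add: prod_Basis_vec inner_axis)
    also have "\<dots> = (u1 - l1) * (u2 - l2) * (u3 - l3)"
      unfolding prod_UNIV_3 by (simp add: l'_def u'_def)
    also have "\<dots> = (\<Prod>b\<in>Basis. (u - l) \<bullet> b)"
      by (simp add: Basis lu mult.assoc)
    finally show ?thesis .
  qed
  ultimately show "emeasure (distr lborel borel cyl_coords) (box l u) = (\<Prod>b\<in>Basis. (u - l) \<bullet> b)"
    by (simp add: emeasure_distr)
qed simp

text \<open>Fubini for \<open>\<real>\<^sup>3 = \<real>\<^sup>2 \<times> \<real>\<close>, then polar coordinates in the first factor.\<close>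
lemma nn_integral_cylindrical:
  fixes F :: "real \<Rightarrow> real \<Rightarrow> ennreal"
  assumes "(\<lambda>p. F (fst p) (snd p)) \<in> borel_measurable (borel \<Otimes>\<^sub>M borel)"
  shows "(\<integral>\<^sup>+y. F (rad y) (y$3) \<partial>lborel) = (\<integral>\<^sup>+z. (\<integral>\<^sup>+\<rho>. ennreal (2*pi*\<rho>) * F \<rho> z \<partial>lborel) \<partial>lborel)"
proof -
  have F: "(\<lambda>p. F (fst p) (snd p)) \<in> borel_measurable borel"
    using assms by (simp add: borel_prod)
  have Fz: "(\<lambda>\<rho>. F \<rho> z) \<in> borel_measurable borel" for z
  proof -
    have "(\<lambda>\<rho>::real. (\<rho>, z)) \<in> borel_measurable borel"
      by (intro borel_measurable_continuous_onI continuous_intros)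
    from measurable_compose[OF this F] show ?thesis by simp
  qed
  have Fn: "(\<lambda>p. F (norm (fst p)) (snd p)) \<in> borel_measurable (borel :: ((real \<times> real) \<times> real) measure)"
  proof -
    have "(\<lambda>p::(real \<times> real) \<times> real. (norm (fst p), snd p)) \<in> borel_measurable borel"
      by (intro borel_measurable_continuous_onI continuous_intros)
    from measurable_compose[OF this F] show ?thesis by simp
  qed
  have "(\<integral>\<^sup>+y. F (rad y) (y$3) \<partial>lborel)
      = (\<integral>\<^sup>+y. F (norm (fst (cyl_coords y))) (snd (cyl_coords y)) \<partial>lborel)"
    by (simp add: cyl_coords_def rad_def norm_Pair)
  also have "\<dots> = (\<integral>\<^sup>+p. F (norm (fst p)) (snd p) \<partial>distr lborel borel cyl_coords)"
    using Fn by (subst nn_integral_distr) auto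
  also have "\<dots> = (\<integral>\<^sup>+p. F (norm (fst p)) (snd p)
      \<partial>(lborel \<Otimes>\<^sub>M lborel :: ((real \<times> real) \<times> real) measure))"
    by (simp add: distr_cyl_coords_lborel lborel_prod)
  also have "\<dots> = (\<integral>\<^sup>+z. (\<integral>\<^sup>+q. F (norm (q :: real \<times> real)) z \<partial>lborel) \<partial>lborel)"
  proof -
    have "(\<lambda>p. F (norm (fst p)) (snd p))
        \<in> borel_measurable (lborel \<Otimes>\<^sub>M lborel :: ((real \<times> real) \<times> real) measure)"
      using Fn by (simp add: lborel_prod)
    from lborel_pair.nn_integral_snd[OF this]
    have "(\<integral>\<^sup>+z. (\<integral>\<^sup>+q. F (norm (q :: real \<times> real)) z \<partial>lborel) \<partial>lborel)
        = (\<integral>\<^sup>+p. F (norm (fst p)) (snd p) \<partial>(lborel \<Otimes>\<^sub>M lborel :: ((real \<times> real) \<times> real) measure))"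
      by (simp only: fst_conv snd_conv)
    then show ?thesis
      by (rule sym)
  qed
  also have "\<dots> = (\<integral>\<^sup>+z. (\<integral>\<^sup>+\<rho>. F \<rho> z \<partial>distr (lborel :: (real \<times> real) measure) borel norm) \<partial>lborel)"
    using Fz by (subst nn_integral_distr) auto
  also have "\<dots> = (\<integral>\<^sup>+z. (\<integral>\<^sup>+\<rho>. ennreal (2*pi*\<rho>) * F \<rho> z \<partial>lborel) \<partial>lborel)"
    unfolding distr_norm_lborel_plane using Fz by (subst nn_integral_density) auto
  finally show ?thesis .
qed

lemma rad_nonneg: "0 \<le> rad y"
  by (simp add: rad_def)

lemma AE_rad_neq_0: "AE y in lborel. rad y \<noteq> 0"
proof -
  have "{y :: real^3. y$1 = 0} \<in> sets lborel"
    by measurable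
  then have "{y :: real^3. y$1 = 0} \<in> null_sets lborel"
    using negligible_standard_hyperplane_cart[of 1]
    by (simp add: negligible_iff_null_sets null_sets_completion_iff)
  from AE_not_in[OF this] show ?thesis
    by eventually_elim (auto simp: rad_def)
qed

section \<open>Axially symmetric functions\<close>

lemma has_real_derivative_along_line:
  fixes \<phi> :: "'a::real_normed_vector \<Rightarrow> real"
  assumes "\<phi> differentiable (at (t *\<^sub>R e + c))"
  shows "((\<lambda>t. \<phi> (t *\<^sub>R e + c)) has_real_derivative frechet_derivative \<phi> (at (t *\<^sub>R e + c)) e) (at t)"
proof -
  let ?D = "frechet_derivative \<phi> (at (t *\<^sub>R e + c))"
  have d: "(\<phi> has_derivative ?D) (at (t *\<^sub>R e + c))"
    using assms frechet_derivative_works by blast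
  have "((\<lambda>t. t *\<^sub>R e + c) has_derivative (\<lambda>h. h *\<^sub>R e)) (at t)"
    by (auto intro!: derivative_eq_intros)
  from diff_chain_at[OF this d]
  have "((\<phi> \<circ> (\<lambda>t. t *\<^sub>R e + c)) has_derivative (?D \<circ> (\<lambda>h. h *\<^sub>R e))) (at t)" .
  moreover have "?D \<circ> (\<lambda>h. h *\<^sub>R e) = (*) (?D e)"
    using has_derivative_linear[OF d] by (auto simp: fun_eq_iff linear_cmul)
  ultimately show ?thesis
    by (simp add: has_field_derivative_def comp_def)
qed

lemma frechet_derivative_eq_inner_partials:
  fixes \<phi> :: "real^'n \<Rightarrow> real"
  assumes "\<phi> differentiable (at y)"
  shows "frechet_derivative \<phi> (at y) e = e \<bullet> (\<chi> i. frechet_derivative \<phi> (at y) (axis i 1))"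
proof -
  have lin: "linear (frechet_derivative \<phi> (at y))"
    using assms by (rule linear_frechet_derivative)
  have "frechet_derivative \<phi> (at y) e = frechet_derivative \<phi> (at y) (\<Sum>i\<in>UNIV. e$i *\<^sub>R axis i 1)"
    by (simp add: scalar_mult_eq_scaleR[symmetric] basis_expansion)
  also have "\<dots> = (\<Sum>i\<in>UNIV. e$i * frechet_derivative \<phi> (at y) (axis i 1))"
    using lin by (simp add: linear_sum linear_cmul)
  finally show ?thesis
    by (simp add: inner_vec_def)
qed

lemma rad_vector_0: "rad (vector [t, 0, z]) = \<bar>t\<bar>"
  by (simp add: rad_def)

lemma line_axis_1: "t *\<^sub>R axis 1 1 + vector [0, 0, z] = (vector [t, 0, z] :: real^3)"
  by (auto simp: vec_eq_iff forall_3 axis_def)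

lemma continuous_on_vector_0: "continuous_on UNIV (\<lambda>p::real \<times> real. vector [fst p, 0, snd p] :: real^3)"
proof -
  have eq: "(\<lambda>p::real \<times> real. vector [fst p, 0, snd p] :: real^3)
      = (\<lambda>p. \<chi> i. if i = 1 then fst p else if i = 2 then 0 else snd p)"
    by (auto simp: fun_eq_iff vec_eq_iff forall_3)
  show ?thesis
    unfolding eq
  proof (rule continuous_on_vec_lambda)
    fix i :: 3
    show "continuous_on UNIV (\<lambda>p::real \<times> real. if i = 1 then fst p else if i = 2 then 0 else snd p)"
      by (cases "i = 1"; cases "i = 2") (auto intro!: continuous_intros)
  qed
qed

lemma radial_ray:
  assumes "0 < rad y"
  obtains e c :: "real^3" where "norm e = 1" and "rad y *\<^sub>R e + c = y"
    and "\<And>t. 0 < t \<Longrightarrow> rad (t *\<^sub>R e + c) = t" and "\<And>t. (t *\<^sub>R e + c)$3 = y$3"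
proof
  define r where "r = rad y"
  have r: "0 < r" and rsq: "(y$1)^2 + (y$2)^2 = r^2"
    using assms by (simp_all add: r_def rad_def)
  define e :: "real^3" where "e = vector [y$1/r, y$2/r, 0]"
  define c :: "real^3" where "c = vector [0, 0, y$3]"
  have "(norm e)^2 = ((y$1)^2 + (y$2)^2) / r^2"
    by (simp add: e_def norm_vec_def L2_set_def sum_3 power_divide add_divide_distrib)
  also have "\<dots> = 1" using rsq r by simp
  finally show "norm e = 1"
    using norm_ge_zero[of e] by (auto simp: power2_eq_1_iff)
  show "rad y *\<^sub>R e + c = y"
    using r by (auto simp: vec_eq_iff forall_3 e_def c_def r_def)
  show "rad (t *\<^sub>R e + c) = t" if "0 < t" for t
  proof -
    have "rad (t *\<^sub>R e + c) = sqrt (t^2 * (((y$1)^2 + (y$2)^2) / r^2))"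
      by (simp add: rad_def e_def c_def power_divide power_mult_distrib add_divide_distrib algebra_simps)
    also have "\<dots> = t" using rsq r that by simp
    finally show ?thesis .
  qed
  show "(t *\<^sub>R e + c)$3 = y$3" for t
    by (simp add: e_def c_def)
qed

definition profile :: "(real^3 \<Rightarrow> real) \<Rightarrow> real \<Rightarrow> real \<Rightarrow> real" where
  "profile \<phi> \<rho> z = \<phi> (vector [\<rho>, 0, z])"

definition radial_derivative :: "(real^3 \<Rightarrow> real) \<Rightarrow> real \<Rightarrow> real \<Rightarrow> real" where
  "radial_derivative \<phi> \<rho> z = frechet_derivative \<phi> (at (vector [\<rho>, 0, z])) (axis 1 1)"

lemma profile_rad:
  fixes \<phi> :: "real^3 \<Rightarrow> real" and y :: "real^3"
  assumes "\<And>y z. rad y = rad z \<Longrightarrow> y$3 = z$3 \<Longrightarrow> \<phi> y = \<phi> z"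
  shows "\<phi> y = profile \<phi> (rad y) (y$3)"
  unfolding profile_def by (rule assms) (simp_all add: rad_vector_0 rad_nonneg)

lemma has_real_derivative_profile:
  assumes "\<And>y. \<phi> differentiable (at y)"
  shows "((\<lambda>\<rho>. profile \<phi> \<rho> z) has_real_derivative radial_derivative \<phi> \<rho> z) (at \<rho>)"
  using has_real_derivative_along_line[where t=\<rho> and e="axis 1 1" and c="vector [0,0,z]", OF assms]
  unfolding line_axis_1 profile_def radial_derivative_def .

lemma continuous_on_profile:
  assumes "continuous_on UNIV \<phi>"
  shows "continuous_on UNIV (\<lambda>p. profile \<phi> (fst p) (snd p))"
  unfolding profile_def by (rule continuous_on_compose2[OF assms continuous_on_vector_0]) auto

lemma continuous_on_radial_derivative:
  assumes "continuous_on UNIV (\<lambda>y. frechet_derivative \<phi> (at y) (axis 1 1))"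
  shows "continuous_on UNIV (\<lambda>p. radial_derivative \<phi> (fst p) (snd p))"
  unfolding radial_derivative_def by (rule continuous_on_compose2[OF assms continuous_on_vector_0]) auto

text \<open>By symmetry, the radial derivative at \<open>(rad y, 0, y\<^sub>3)\<close> is the derivative of \<open>\<phi>\<close> at \<open>y\<close>
  in the unit direction \<open>e\<^sub>r\<close>, hence bounded by the length of the gradient.\<close>
lemma abs_radial_derivative_le:
  fixes \<phi> :: "real^3 \<Rightarrow> real"
  assumes diff: "\<And>y. \<phi> differentiable (at y)"
    and axi: "\<And>y z. rad y = rad z \<Longrightarrow> y$3 = z$3 \<Longrightarrow> \<phi> y = \<phi> z"
    and r: "0 < rad y"
  shows "\<bar>radial_derivative \<phi> (rad y) (y$3)\<bar> \<le> norm (\<chi> i. frechet_derivative \<phi> (at y) (axis i 1))"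
proof -
  obtain e c :: "real^3" where e: "norm e = 1" and y: "rad y *\<^sub>R e + c = y"
    and rad_ray: "\<And>t. 0 < t \<Longrightarrow> rad (t *\<^sub>R e + c) = t" and z_ray: "\<And>t. (t *\<^sub>R e + c)$3 = y$3"
    using radial_ray[OF r] by blast
  have same: "profile \<phi> t (y$3) = \<phi> (t *\<^sub>R e + c)" if "0 < t" for t
    unfolding profile_def
    by (rule axi) (use that rad_ray[OF that] z_ray[of t] in \<open>simp_all add: rad_vector_0\<close>)
  have "((\<lambda>t. \<phi> (t *\<^sub>R e + c)) has_real_derivative radial_derivative \<phi> (rad y) (y$3)) (at (rad y))"
    using has_real_derivative_profile[OF diff]
    by (rule has_field_derivative_transform_within_open[where S="{0<..}"]) (use r same in auto)
  moreover have "((\<lambda>t. \<phi> (t *\<^sub>R e + c)) has_real_derivative frechet_derivative \<phi> (at y) e) (at (rad y))"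
    using has_real_derivative_along_line[where t="rad y" and e=e and c=c, OF diff] unfolding y .
  ultimately have "radial_derivative \<phi> (rad y) (y$3) = frechet_derivative \<phi> (at y) e"
    by (rule DERIV_unique)
  also have "\<dots> = e \<bullet> (\<chi> i. frechet_derivative \<phi> (at y) (axis i 1))"
    by (rule frechet_derivative_eq_inner_partials[OF diff])
  finally show ?thesis
    using Cauchy_Schwarz_ineq2[of e] e by simp
qed

lemma nn_integral_radial_derivative_le:
  fixes \<phi> :: "real^3 \<Rightarrow> real"
  assumes "\<And>y. \<phi> differentiable (at y)"
    and "\<And>y z. rad y = rad z \<Longrightarrow> y$3 = z$3 \<Longrightarrow> \<phi> y = \<phi> z"
  shows "(\<integral>\<^sup>+y. ennreal ((radial_derivative \<phi> (rad y) (y$3))^2) \<partial>lborel)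
    \<le> (\<integral>\<^sup>+y. ennreal ((norm (\<chi> i. frechet_derivative \<phi> (at y) (axis i 1)))^2) \<partial>lborel)"
  using AE_rad_neq_0
proof (rule nn_integral_mono_AE[OF eventually_mono])
  fix y :: "real^3"
  assume "rad y \<noteq> 0"
  then have "0 < rad y"
    using rad_nonneg[of y] by simp
  from abs_radial_derivative_le[OF assms this]
  show "ennreal ((radial_derivative \<phi> (rad y) (y$3))^2)
      \<le> ennreal ((norm (\<chi> i. frechet_derivative \<phi> (at y) (axis i 1)))^2)"
    by (intro ennreal_leI) (metis abs_ge_zero power2_abs power_mono)
qed

text \<open>On the axis both sides vanish because of the junk value \<open>x / 0 = 0\<close>.\<close>
lemma hardy_integrand_eq_profile:
  fixes \<phi> :: "real^3 \<Rightarrow> real" and a m :: real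
  assumes axi: "\<And>y z. rad y = rad z \<Longrightarrow> y$3 = z$3 \<Longrightarrow> \<phi> y = \<phi> z"
    and supp: "\<And>y. a \<le> rad y \<Longrightarrow> \<phi> y = 0"
  shows "ennreal ((\<phi> y)^2 * (-ln (rad y)) powr (-(2+m)) / (rad y)^2)
    = ennreal ((profile \<phi> (rad y) (y$3))^2 * (-ln (rad y)) powr (-(2+m)) / (rad y)^2)
      * indicator {0<..<a} (rad y)"
proof -
  consider "rad y = 0" | "a \<le> rad y" | "0 < rad y" "rad y < a"
    using rad_nonneg[of y] by force
  then show ?thesis
  proof cases
    case 1
    then show ?thesis by simp
  next
    case 2
    then show ?thesis using supp[of y] by simp
  next
    case 3
    then show ?thesis using profile_rad[of \<phi> y, OF axi] by simp
  qed
qed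

lemma log_hardy_axisymmetric:
  fixes \<phi> :: "real^3 \<Rightarrow> real" and a m :: real
  assumes diff: "\<And>y. \<phi> differentiable (at y)"
    and grad_cont: "\<And>i. continuous_on UNIV (\<lambda>y. frechet_derivative \<phi> (at y) (axis i 1))"
    and axi: "\<And>y z. rad y = rad z \<Longrightarrow> y$3 = z$3 \<Longrightarrow> \<phi> y = \<phi> z"
    and supp: "\<And>y. a \<le> rad y \<Longrightarrow> \<phi> y = 0"
    and a: "0 < a" "a < 1" and m: "0 < m"
  shows "(\<integral>\<^sup>+y. ennreal ((\<phi> y)^2 * (-ln (rad y)) powr (-(2+m)) / (rad y)^2) \<partial>lborel)
    \<le> ennreal (4 * (-ln a) powr (-m))
      * (\<integral>\<^sup>+y. ennreal ((norm (\<chi> i. frechet_derivative \<phi> (at y) (axis i 1)))^2) \<partial>lborel)"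
proof -
  define c where "c = 4 * (-ln a) powr (-m)"
  have c: "0 < c" using a by (simp add: c_def)
  have "continuous_on UNIV \<phi>"
    using diff by (auto simp: differentiable_on_def intro: differentiable_imp_continuous_on)
  from borel_measurable_continuous_onI[OF continuous_on_profile[OF this]]
  have [measurable]: "(\<lambda>p. profile \<phi> (fst p) (snd p)) \<in> borel_measurable (borel \<Otimes>\<^sub>M borel)"
    by (simp add: borel_prod)
  have Dr_cont: "continuous_on UNIV (\<lambda>p. radial_derivative \<phi> (fst p) (snd p))"
    using continuous_on_radial_derivative grad_cont by blast
  from borel_measurable_continuous_onI[OF this]
  have [measurable]: "(\<lambda>p. radial_derivative \<phi> (fst p) (snd p)) \<in> borel_measurable (borel \<Otimes>\<^sub>M borel)"
    by (simp add: borel_prod)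
  have "(\<integral>\<^sup>+y. ennreal ((\<phi> y)^2 * (-ln (rad y)) powr (-(2+m)) / (rad y)^2) \<partial>lborel)
      = (\<integral>\<^sup>+y. ennreal ((profile \<phi> (rad y) (y$3))^2 * (-ln (rad y)) powr (-(2+m)) / (rad y)^2)
          * indicator {0<..<a} (rad y) \<partial>lborel)"
    by (rule nn_integral_cong) (rule hardy_integrand_eq_profile[of \<phi>, OF axi supp])
  also have "\<dots> = (\<integral>\<^sup>+z. (\<integral>\<^sup>+\<rho>. ennreal (2*pi*\<rho>) * (ennreal ((profile \<phi> \<rho> z)^2
      * (-ln \<rho>) powr (-(2+m)) / \<rho>^2) * indicator {0<..<a} \<rho>) \<partial>lborel) \<partial>lborel)"
    by (rule nn_integral_cylindrical[of "\<lambda>\<rho> z. ennreal ((profile \<phi> \<rho> z)^2 * (-ln \<rho>) powr (-(2+m)) / \<rho>^2)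
        * indicator {0<..<a} \<rho>"]) measurable
  also have "\<dots> \<le> (\<integral>\<^sup>+z. ennreal c
      * (\<integral>\<^sup>+\<rho>. ennreal (2*pi*\<rho>) * ennreal ((radial_derivative \<phi> \<rho> z)^2) \<partial>lborel) \<partial>lborel)"
  proof (intro nn_integral_mono, unfold c_def, rule log_hardy_polar[OF a m has_real_derivative_profile[OF diff]])
    fix z
    have "continuous_on UNIV (\<lambda>\<rho>. radial_derivative \<phi> \<rho> z)"
      using continuous_on_compose2[OF Dr_cont, of UNIV "\<lambda>\<rho>. (\<rho>, z)"] by (simp add: continuous_intros)
    then show "continuous_on {0..a} (\<lambda>\<rho>. radial_derivative \<phi> \<rho> z)"
      by (rule continuous_on_subset) auto
    show "profile \<phi> a z = 0"
      unfolding profile_def using a by (intro supp) (simp add: rad_vector_0)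
  qed
  also have "\<dots> = ennreal c
      * (\<integral>\<^sup>+z. (\<integral>\<^sup>+\<rho>. ennreal (2*pi*\<rho>) * ennreal ((radial_derivative \<phi> \<rho> z)^2) \<partial>lborel) \<partial>lborel)"
    by (rule nn_integral_cmult_pos[OF c])
  also have "\<dots> = ennreal c * (\<integral>\<^sup>+y. ennreal ((radial_derivative \<phi> (rad y) (y$3))^2) \<partial>lborel)"
  proof -
    have "(\<lambda>p. ennreal ((radial_derivative \<phi> (fst p) (snd p))^2)) \<in> borel_measurable (borel \<Otimes>\<^sub>M borel)"
      by measurable
    from nn_integral_cylindrical[of "\<lambda>\<rho> z. ennreal ((radial_derivative \<phi> \<rho> z)^2)", OF this]
    show ?thesis
      by simp
  qed
  also have "\<dots> \<le> ennreal c
      * (\<integral>\<^sup>+y. ennreal ((norm (\<chi> i. frechet_derivative \<phi> (at y) (axis i 1)))^2) \<partial>lborel)"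
    by (rule mult_left_mono[OF nn_integral_radial_derivative_le[OF diff axi] zero_le])
  finally show ?thesis
    unfolding c_def .
qed

lemma has_derivative_slice:
  fixes \<Psi> :: "'a::real_normed_vector \<times> 'b::real_normed_vector \<Rightarrow> real"
  assumes "\<Psi> differentiable (at (y, s))"
  shows "((\<lambda>z. \<Psi> (z, s)) has_derivative (\<lambda>h. frechet_derivative \<Psi> (at (y, s)) (h, 0))) (at y)"
proof -
  have "(\<Psi> has_derivative frechet_derivative \<Psi> (at (y, s))) (at (y, s))"
    using assms frechet_derivative_works by blast
  moreover have "((\<lambda>z. (z, s)) has_derivative (\<lambda>h. (h, 0))) (at y)"
    by (auto intro!: derivative_eq_intros)
  ultimately show ?thesis
    using diff_chain_at[of "\<lambda>z. (z, s)"] by (simp add: comp_def)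
qed

lemma admissible_slice:
  fixes \<psi> :: "real^3 \<Rightarrow> real \<Rightarrow> real"
  assumes adm: "admissible a t \<psi>" and s: "s \<in> {0..t}"
  shows "\<And>y. (\<lambda>z. \<psi> z s) differentiable (at y)"
    and "\<And>i. continuous_on UNIV (\<lambda>y. frechet_derivative (\<lambda>z. \<psi> z s) (at y) (axis i 1))"
    and "\<And>y z. rad y = rad z \<Longrightarrow> y$3 = z$3 \<Longrightarrow> \<psi> y s = \<psi> z s"
    and "\<And>y. a \<le> rad y \<Longrightarrow> \<psi> y s = 0"
proof -
  define \<Psi> where "\<Psi> = (\<lambda>p::(real^3) \<times> real. \<psi> (fst p) (snd p))"
  have "smooth_fun \<Psi>" and axisym: "axisym \<psi>"
    and supp: "\<exists>l\<ge>a. \<forall>s\<in>{0..t}. closure {y. \<psi> y s \<noteq> 0} \<subseteq> cyl a l"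
    using adm unfolding admissible_def \<Psi>_def by blast+
  then have C1: "Ck (Suc 0) \<Psi>"
    unfolding smooth_fun_def by blast
  then have diff: "\<Psi> differentiable (at p)" for p
    unfolding Ck.simps differentiable_on_def by blast
  have cont: "\<And>b. b \<in> Basis \<Longrightarrow> continuous_on UNIV (\<lambda>p. frechet_derivative \<Psi> (at p) b)"
    using C1 by simp
  have slice: "(\<lambda>z. \<psi> z s) = (\<lambda>z. \<Psi> (z, s))"
    by (simp add: \<Psi>_def)
  show "(\<lambda>z. \<psi> z s) differentiable (at y)" for y
    unfolding slice using has_derivative_slice[OF diff] by (auto simp: differentiable_def)
  show "continuous_on UNIV (\<lambda>y. frechet_derivative (\<lambda>z. \<psi> z s) (at y) (axis i 1))" for i
  proof -
    have "frechet_derivative (\<lambda>z. \<psi> z s) (at y) (axis i 1) = frechet_derivative \<Psi> (at (y, s)) (axis i 1, 0)"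
      for y
      unfolding slice using frechet_derivative_at[OF has_derivative_slice[OF diff]] by metis
    moreover have "(axis i 1, 0) \<in> (Basis :: ((real^3) \<times> real) set)"
      by (auto simp: Basis_prod_def)
    then have "continuous_on UNIV (\<lambda>y::real^3. frechet_derivative \<Psi> (at (y, s)) (axis i 1, 0))"
      by (intro continuous_on_compose2[OF cont] continuous_intros) auto
    ultimately show ?thesis
      by simp
  qed
  show "\<psi> y s = \<psi> z s" if "rad y = rad z" "y$3 = z$3" for y z
    using axisym that unfolding axisym_def by blast
  show "\<psi> y s = 0" if "a \<le> rad y" for y
  proof (rule ccontr)
    assume "\<psi> y s \<noteq> 0"
    then have "y \<in> closure {y. \<psi> y s \<noteq> 0}"
      by (auto intro: closure_subset[THEN subsetD])
    moreover obtain l where "closure {y. \<psi> y s \<noteq> 0} \<subseteq> cyl a l"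
      using supp s by blast
    ultimately have "y \<in> cyl a l"
      by blast
    with that show False
      by (simp add: cyl_def)
  qed
qed

section \<open>The critical class\<close>

text \<open>With L = -ln r >= L0 >= 1, the factor L^(-(2+2m)) of the decay hypothesis splits as
  L^(-m) L^(-(2+m)) <= L0^(-m) L^(-(2+m)): the spare power L0^(-m) is what makes the constant small.\<close>
lemma critical_weight_le:
  fixes r L L0 C m V :: real
  assumes r: "0 < r" and L: "L0 \<le> L" and L0: "1 \<le> L0" and C: "0 < C" and m: "0 < m"
    and V: "\<bar>V\<bar> \<le> C / (r * L powr (2 + 2*m))"
  shows "\<bar>V\<bar> / r + V^2 \<le> (C + C^2) * L0 powr (-m) * (L powr (-(2+m)) / r^2)"
proof -
  define P where "P = L powr (2 + 2*m)"
  have P1: "1 \<le> P"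
    unfolding P_def using L L0 m by (simp add: ge_one_powr_ge_zero)
  have h1: "\<bar>V\<bar> / r \<le> C / (r * P) / r"
    using V r unfolding P_def by (intro divide_right_mono) auto
  have "V^2 = \<bar>V\<bar>^2" by simp
  also have "\<dots> \<le> (C / (r * P))^2"
    by (rule power_mono) (use V in \<open>auto simp: P_def\<close>)
  also have "\<dots> = C^2 / (r * P) / (r * P)"
    by (simp add: power2_eq_square)
  also have "\<dots> \<le> C^2 / (r * P) / r"
    using r P1 C by (intro divide_left_mono) auto
  finally have h2: "V^2 \<le> C^2 / (r * P) / r" .
  have "\<bar>V\<bar> / r + V^2 \<le> C / (r * P) / r + C^2 / (r * P) / r"
    using h1 h2 by linarith
  also have "\<dots> = (C + C^2) * (1/P) / r / r"
    using r P1 by (simp add: field_simps)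
  also have "1/P = L powr (-m) * L powr (-(2+m))"
    unfolding P_def powr_minus_divide[symmetric] powr_add[symmetric]
    by (rule arg_cong[where f="\<lambda>e. L powr e"]) simp
  also have "(C + C^2) * (L powr (-m) * L powr (-(2+m))) / r / r
      \<le> (C + C^2) * (L0 powr (-m) * L powr (-(2+m))) / r / r"
    using L L0 m C r by (intro divide_right_mono mult_left_mono mult_right_mono powr_mono2') auto
  also have "\<dots> = (C + C^2) * L0 powr (-m) * (L powr (-(2+m)) / r^2)"
    by (simp add: power2_eq_square)
  finally show ?thesis .
qed

lemma critical_integrand_le:
  fixes \<phi> :: "real^3 \<Rightarrow> real" and v :: "real \<Rightarrow> real \<Rightarrow> real" and C m a :: real
  assumes supp: "\<And>y. a \<le> rad y \<Longrightarrow> \<phi> y = 0"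
    and decay: "\<And>r x3. 0 < r \<Longrightarrow> r < 1/2 \<Longrightarrow> \<bar>v r x3\<bar> \<le> C / (r * \<bar>ln r\<bar> powr (2 + 2*m))"
    and C: "0 < C" and m: "0 < m" and a: "a < 1/2" "1 \<le> -ln a" and r: "0 < rad y"
  shows "(\<bar>v (rad y) (y$3)\<bar> / rad y + (v (rad y) (y$3))^2) * (\<phi> y)^2
    \<le> (C + C^2) * (-ln a) powr (-m) * ((\<phi> y)^2 * (-ln (rad y)) powr (-(2+m)) / (rad y)^2)"
proof (cases "a \<le> rad y")
  case True
  then show ?thesis by (simp add: supp)
next
  case False
  then have "ln (rad y) < 0" "ln (rad y) \<le> ln a"
    using r a by auto
  then have L: "-ln a \<le> -ln (rad y)" and abs_ln: "\<bar>ln (rad y)\<bar> = -ln (rad y)"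
    by auto
  have "\<bar>v (rad y) (y$3)\<bar> \<le> C / (rad y * (-ln (rad y)) powr (2 + 2*m))"
    using decay[of "rad y" "y$3"] r False a by (simp add: abs_ln)
  from critical_weight_le[OF r L a(2) C m this]
  have "(\<bar>v (rad y) (y$3)\<bar> / rad y + (v (rad y) (y$3))^2) * (\<phi> y)^2
      \<le> (C + C^2) * (-ln a) powr (-m) * ((-ln (rad y)) powr (-(2+m)) / (rad y)^2) * (\<phi> y)^2"
    by (rule mult_right_mono) simp
  then show ?thesis
    by (simp add: mult_ac)
qed

lemma critical_bound_slice:
  fixes \<phi> :: "real^3 \<Rightarrow> real" and v :: "real \<Rightarrow> real \<Rightarrow> real" and C \<epsilon> a lam1 :: real
  assumes diff: "\<And>y. \<phi> differentiable (at y)"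
    and grad_cont: "\<And>i. continuous_on UNIV (\<lambda>y. frechet_derivative \<phi> (at y) (axis i 1))"
    and axi: "\<And>y z. rad y = rad z \<Longrightarrow> y$3 = z$3 \<Longrightarrow> \<phi> y = \<phi> z"
    and supp: "\<And>y. a \<le> rad y \<Longrightarrow> \<phi> y = 0"
    and decay: "\<And>r x3. 0 < r \<Longrightarrow> r < 1/2 \<Longrightarrow> \<bar>v r x3\<bar> \<le> C / (r * \<bar>ln r\<bar> powr (2 + \<epsilon>))"
    and C: "0 < C" and eps: "0 < \<epsilon>" and a: "0 < a" "a < 1/2" "1 \<le> -ln a"
    and small: "4 * (C + C^2) * (-ln a) powr (-\<epsilon>) \<le> lam1"
  shows "(\<integral>\<^sup>+y. ennreal ((\<bar>v (rad y) (y$3)\<bar> / rad y + (v (rad y) (y$3))^2) * (\<phi> y)^2) \<partial>lborel)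
    \<le> ennreal lam1 * (\<integral>\<^sup>+y. ennreal ((norm (\<chi> i. frechet_derivative \<phi> (at y) (axis i 1)))^2) \<partial>lborel)"
proof -
  define m where "m = \<epsilon>/2"
  have m: "0 < m" and decay_m: "\<And>r x3. 0 < r \<Longrightarrow> r < 1/2 \<Longrightarrow> \<bar>v r x3\<bar> \<le> C / (r * \<bar>ln r\<bar> powr (2 + 2*m))"
    using eps decay by (simp_all add: m_def)
  define K where "K = (C + C^2) * (-ln a) powr (-m)"
  have K: "0 < K"
    using C a by (simp add: K_def add_pos_pos)
  define grad where "grad = (\<integral>\<^sup>+y. ennreal ((norm (\<chi> i. frechet_derivative \<phi> (at y) (axis i 1)))^2) \<partial>lborel)"
  have "(\<integral>\<^sup>+y. ennreal ((\<bar>v (rad y) (y$3)\<bar> / rad y + (v (rad y) (y$3))^2) * (\<phi> y)^2) \<partial>lborel)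
      \<le> (\<integral>\<^sup>+y. ennreal K * ennreal ((\<phi> y)^2 * (-ln (rad y)) powr (-(2+m)) / (rad y)^2) \<partial>lborel)"
    using AE_rad_neq_0
  proof (rule nn_integral_mono_AE[OF eventually_mono])
    fix y :: "real^3"
    assume "rad y \<noteq> 0"
    then have "0 < rad y"
      using rad_nonneg[of y] by simp
    from critical_integrand_le[OF supp decay_m C m a(2,3) this]
    show "ennreal ((\<bar>v (rad y) (y$3)\<bar> / rad y + (v (rad y) (y$3))^2) * (\<phi> y)^2)
        \<le> ennreal K * ennreal ((\<phi> y)^2 * (-ln (rad y)) powr (-(2+m)) / (rad y)^2)"
      using K by (simp add: K_def ennreal_mult'[symmetric] ennreal_leI)
  qed
  also have "\<dots> = ennreal K * (\<integral>\<^sup>+y. ennreal ((\<phi> y)^2 * (-ln (rad y)) powr (-(2+m)) / (rad y)^2) \<partial>lborel)"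
    by (rule nn_integral_cmult_pos[OF K])
  also have "\<dots> \<le> ennreal K * (ennreal (4 * (-ln a) powr (-m)) * grad)"
    unfolding grad_def using a
    by (intro mult_left_mono[OF log_hardy_axisymmetric[OF diff grad_cont axi supp _ _ m] zero_le]) auto
  also have "\<dots> = ennreal (K * (4 * (-ln a) powr (-m))) * grad"
    using K by (simp add: ennreal_mult' mult.assoc)
  also have "K * (4 * (-ln a) powr (-m)) = 4 * (C + C^2) * ((-ln a) powr (-m) * (-ln a) powr (-m))"
    by (simp add: K_def mult_ac)
  also have "(-ln a) powr (-m) * (-ln a) powr (-m) = (-ln a) powr (-\<epsilon>)"
    unfolding powr_add[symmetric] m_def by simp
  also have "ennreal (4 * (C + C^2) * (-ln a) powr (-\<epsilon>)) * grad \<le> ennreal lam1 * grad"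
    using small by (intro mult_right_mono ennreal_leI) auto
  finally show ?thesis
    unfolding grad_def .
qed

lemma exists_small_log_radius:
  fixes K \<epsilon> lam :: real
  assumes "0 < \<epsilon>" "0 < lam"
  shows "\<exists>a. 0 < a \<and> a < 1/2 \<and> 1 \<le> -ln a \<and> K * (-ln a) powr (-\<epsilon>) \<le> lam"
proof -
  have "((\<lambda>L. K * L powr (-\<epsilon>)) \<longlongrightarrow> K * 0) at_top"
    using assms(1) by (intro tendsto_mult tendsto_const tendsto_neg_powr filterlim_ident) simp
  then have "eventually (\<lambda>L. K * L powr (-\<epsilon>) < lam) at_top"
    using order_tendstoD(2) assms(2) by fastforce
  moreover have "eventually (\<lambda>L::real. 1 \<le> L \<and> ln 2 < L) at_top"
    by (intro eventually_conj eventually_ge_at_top eventually_gt_at_top)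
  ultimately obtain L where L: "K * L powr (-\<epsilon>) < lam" "1 \<le> L" "ln 2 < L"
    by (metis (mono_tags, lifting) eventually_at_top_linorder eventually_conj order_refl)
  have "exp (-L) < exp (-ln 2)"
    using L by simp
  then have "exp (-L) < 1/2"
    by (simp add: exp_minus)
  with L show ?thesis
    by (intro exI[of _ "exp (-L)"]) auto
qed

lemma set_nn_integral_le_cmult:
  fixes c :: real
  assumes "0 < c" and "\<And>s. s \<in> A \<Longrightarrow> f s \<le> ennreal c * g s"
  shows "(\<integral>\<^sup>+s\<in>A. f s \<partial>M) \<le> ennreal c * (\<integral>\<^sup>+s\<in>A. g s \<partial>M)"
proof -
  have "(\<integral>\<^sup>+s\<in>A. f s \<partial>M) \<le> (\<integral>\<^sup>+s. ennreal c * (g s * indicator A s) \<partial>M)"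
    using assms(2) by (intro nn_integral_mono) (auto simp: indicator_def)
  also have "\<dots> = ennreal c * (\<integral>\<^sup>+s\<in>A. g s \<partial>M)"
    by (rule nn_integral_cmult_pos[OF assms(1)])
  finally show ?thesis .
qed

text \<open>The inequality already holds slice by slice in time and without the lambda_2 term, so any
  lambda_2 > 0 (here 1) works.\<close>
lemma critical_class_of_decay:
  fixes vth :: "real \<Rightarrow> real \<Rightarrow> real \<Rightarrow> real" and C \<epsilon> a lam1 :: real
  assumes C: "0 < C" and eps: "0 < \<epsilon>"
    and decay: "\<And>r x3 t. t \<ge> 0 \<Longrightarrow> 0 < r \<Longrightarrow> r < 1/2 \<Longrightarrow>
           \<bar>vth r x3 t\<bar> \<le> C / (r * \<bar>ln r\<bar> powr (2 + \<epsilon>))"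
    and a: "0 < a" "a < 1/2" "1 \<le> -ln a"
    and small: "4 * (C + C^2) * (-ln a) powr (-\<epsilon>) \<le> lam1"
  shows "critical_class lam1 vth"
  unfolding critical_class_def
proof (rule exI[of _ a], rule exI[of _ "1::real"], intro conjI allI impI)
  show "0 < a" "a < 1" "(0::real) < 1"
    using a by auto
  have lam1: "0 < lam1"
    using small C a by (smt (verit) powr_gt_zero zero_less_power mult_pos_pos)
  fix t :: real and \<psi> :: "real^3 \<Rightarrow> real \<Rightarrow> real"
  assume adm: "admissible a t \<psi>"
  have "(\<integral>\<^sup>+s\<in>{0..t}. (\<integral>\<^sup>+y. ennreal ((\<bar>vth (rad y) (y$3) s\<bar> / rad y + (vth (rad y) (y$3) s)^2)
          * (\<psi> y s)^2) \<partial>lborel) \<partial>lborel)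
      \<le> ennreal lam1 * (\<integral>\<^sup>+s\<in>{0..t}. (\<integral>\<^sup>+y. ennreal ((norm (grad_y \<psi> y s))^2) \<partial>lborel) \<partial>lborel)"
  proof (rule set_nn_integral_le_cmult[OF lam1])
    fix s assume s: "s \<in> {0..t}"
    have "\<bar>vth r x3 s\<bar> \<le> C / (r * \<bar>ln r\<bar> powr (2 + \<epsilon>))" if "0 < r" "r < 1/2" for r x3
      using decay that s by simp
    from critical_bound_slice[OF admissible_slice[OF adm s] this C eps a small]
    show "(\<integral>\<^sup>+y. ennreal ((\<bar>vth (rad y) (y$3) s\<bar> / rad y + (vth (rad y) (y$3) s)^2) * (\<psi> y s)^2) \<partial>lborel)
        \<le> ennreal lam1 * (\<integral>\<^sup>+y. ennreal ((norm (grad_y \<psi> y s))^2) \<partial>lborel)"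
      unfolding grad_y_def .
  qed
  then show "(\<integral>\<^sup>+s\<in>{0..t}. (\<integral>\<^sup>+y. ennreal ((\<bar>vth (rad y) (y$3) s\<bar> / rad y + (vth (rad y) (y$3) s)^2)
          * (\<psi> y s)^2) \<partial>lborel) \<partial>lborel)
      \<le> ennreal lam1 * (\<integral>\<^sup>+s\<in>{0..t}. (\<integral>\<^sup>+y. ennreal ((norm (grad_y \<psi> y s))^2) \<partial>lborel) \<partial>lborel)
        + ennreal (1 / a^2) * (\<integral>\<^sup>+s\<in>{0..t}. (\<integral>\<^sup>+y. ennreal ((\<psi> y s)^2) \<partial>lborel) \<partial>lborel)"
    by (rule order_trans) (rule add_increasing2, simp_all)
qed

theorem mainTheorem2:
  fixes vth :: "real \<Rightarrow> real \<Rightarrow> real \<Rightarrow> real" and C \<epsilon> :: real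
  assumes "C > 0" and "\<epsilon> > 0"
    and "\<And>r x3 t. t \<ge> 0 \<Longrightarrow> 0 < r \<Longrightarrow> r < 1/2 \<Longrightarrow>
           \<bar>vth r x3 t\<bar> \<le> C / (r * \<bar>ln r\<bar> powr (2 + \<epsilon>))"
  shows "\<forall>lam1>0. critical_class lam1 vth"
proof (intro allI impI)
  fix lam1 :: real
  assume "0 < lam1"
  then obtain a where "0 < a" "a < 1/2" "1 \<le> -ln a" "4 * (C + C^2) * (-ln a) powr (-\<epsilon>) \<le> lam1"
    using exists_small_log_radius[OF assms(2)] by blast
  with assms show "critical_class lam1 vth"
    by (intro critical_class_of_decay)
qed

end
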